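(* There is no LCL problem on cycles with mending radius between $\omega(1)$ and $o(n)$: if an LCL problem $\Pi$ on the family of all cycles is $T$-mendable for some function $T$ with $T(n)=o(n)$, then $\Pi$ is $T'$-mendable for some constant function $T'$.
   Context: A locally verifiable problem $\Pi$ on a graph family $\mathcal{G}$ is given by a set $\Sigma$ of input labels, a set $\Gamma$ of output labels and a verifier $\psi$ with verification radius $r$: $\psi(G,\lambda,v)\in\{\text{happy},\text{unhappy}\}$ depends only on the radius-$r$ neighborhood of $v$ (structure, inputs and outputs, up to isomorphism); $\lambda:V\to\Gamma$ is a solution if $\psi$ is happy everywhere. $\Pi$ is an LCL problem if $\Sigma,\Gamma$ are finite and all graphs in $\mathcal{G}$ have maximum degree bounded by a constant. Partial labelings are maps $\lambda:V\to\Gamma\cup\{\bot\}$; the relaxed verifier $\psi^*$ is happy at $v$ if some node within distance $r$ of $v$ has label $\bot$, and otherwise $\psi^*(G,\lambda,v)=\psi(G,\lambda',v)$ for any $\lambda':V\to\Gamma$ agreeing with $\lambda$ on the radius-$r$ neighborhood of $v$; $\psi^*$ accepts $\lambda$ if happy everywhere. Given $\lambda$ accepted by $\psi^*$ and node $v$, a $t$-mend of $\lambda$ at $v$ is a partial labeling $\mu$ accepted by $\psi^*$ with $\mu(v)\neq\bot$, $\mu(u)=\bot\Rightarrow\lambda(u)=\bot$, and $\mu(u)\neq\lambda(u)\Rightarrow\mathrm{dist}(u,v)\le t$. A verifier is $T$-mendable if for every $G\in\mathcal{G}$ with $n$ nodes, every $\lambda$ accepted by $\psi^*$ and every node $v$,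 a $T(n)$-mend at $v$ exists; $\Pi$ is $T$-mendable if some radius-$r$ verifier for $\Pi$ (accepting exactly the solutions of $\Pi$) is $T$-mendable. *)

theory Defs
  imports Complex_Main "HOL-Library.Landau_Symbols"
begin

type_synonym graph = "nat set \<times> (nat \<times> nat) set"

definition verts :: "graph \<Rightarrow> nat set" where "verts G = fst G"
definition edges :: "graph \<Rightarrow> (nat \<times> nat) set" where "edges G = snd G"

definition is_cycle :: "graph \<Rightarrow> bool" where
  "is_cycle G \<longleftrightarrow> (\<exists>n g. n \<ge> 3 \<and> bij_betw g {0..<n} (verts G) \<and>
     edges G = {(g i, g (Suc i mod n)) | i. i < n} \<union> {(g (Suc i mod n), g i) | i. i < n})"

definition dist_le :: "graph \<Rightarrow> nat \<Rightarrow> nat \<Rightarrow> real \<Rightarrow> bool" where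
  "dist_le G v u t \<longleftrightarrow> v \<in> verts G \<and> (\<exists>k::nat. real k \<le> t \<and> (v, u) \<in> (edges G) ^^ k)"

definition ball :: "graph \<Rightarrow> nat \<Rightarrow> nat \<Rightarrow> nat set" where
  "ball G v r = {u. dist_le G v u (real r)}"

definition ball_iso ::
  "nat \<Rightarrow> graph \<Rightarrow> (nat \<Rightarrow> 'i) \<Rightarrow> (nat \<Rightarrow> 'l) \<Rightarrow> nat \<Rightarrow>
          graph \<Rightarrow> (nat \<Rightarrow> 'i) \<Rightarrow> (nat \<Rightarrow> 'l) \<Rightarrow> nat \<Rightarrow> (nat \<Rightarrow> nat) \<Rightarrow> bool" where
  "ball_iso r G inp lam v G' inp' lam' v' f \<longleftrightarrow>
     bij_betw f (ball G v r) (ball G' v' r) \<and> f v = v' \<and>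
     (\<forall>x\<in>ball G v r. \<forall>y\<in>ball G v r. (x, y) \<in> edges G \<longleftrightarrow> (f x, f y) \<in> edges G') \<and>
     (\<forall>x\<in>ball G v r. inp' (f x) = inp x \<and> lam' (f x) = lam x)"

text \<open>A verifier: happy (True) / unhappy (False) at a node, given graph, inputs, outputs.\<close>
type_synonym ('i, 'o) verifier = "graph \<Rightarrow> (nat \<Rightarrow> 'i) \<Rightarrow> (nat \<Rightarrow> 'o) \<Rightarrow> nat \<Rightarrow> bool"

definition local_verifier :: "nat \<Rightarrow> ('i, 'o) verifier \<Rightarrow> bool" where
  "local_verifier r \<psi> \<longleftrightarrow>
     (\<forall>G G' inp inp' lam lam' v v' f.
        is_cycle G \<and> is_cycle G' \<and> v \<in> verts G \<and> v' \<in> verts G' \<and>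
        ball_iso r G inp lam v G' inp' lam' v' f \<longrightarrow> \<psi> G inp lam v = \<psi> G' inp' lam' v')"

text \<open>Relaxed verifier on partial labelings (None = bottom).\<close>
definition relaxed :: "nat \<Rightarrow> ('i, 'o) verifier \<Rightarrow> graph \<Rightarrow> (nat \<Rightarrow> 'i) \<Rightarrow> (nat \<Rightarrow> 'o option) \<Rightarrow> nat \<Rightarrow> bool" where
  "relaxed r \<psi> G inp \<mu> v \<longleftrightarrow>
     (\<exists>u\<in>ball G v r. \<mu> u = None) \<or>
     (\<forall>lam'. (\<forall>u\<in>ball G v r. \<mu> u = Some (lam' u)) \<longrightarrow> \<psi> G inp lam' v)"

definition accepts_relaxed :: "nat \<Rightarrow> ('i, 'o) verifier \<Rightarrow> graph \<Rightarrow> (nat \<Rightarrow> 'i) \<Rightarrow> (nat \<Rightarrow> 'o option) \<Rightarrow> bool" where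
  "accepts_relaxed r \<psi> G inp \<mu> \<longleftrightarrow> (\<forall>v\<in>verts G. relaxed r \<psi> G inp \<mu> v)"

definition is_mend :: "nat \<Rightarrow> ('i, 'o) verifier \<Rightarrow> graph \<Rightarrow> (nat \<Rightarrow> 'i) \<Rightarrow> (nat \<Rightarrow> 'o option) \<Rightarrow>
                       nat \<Rightarrow> real \<Rightarrow> (nat \<Rightarrow> 'o option) \<Rightarrow> bool" where
  "is_mend r \<psi> G inp lam v t \<mu> \<longleftrightarrow>
     accepts_relaxed r \<psi> G inp \<mu> \<and> \<mu> v \<noteq> None \<and>
     (\<forall>u\<in>verts G. \<mu> u = None \<longrightarrow> lam u = None) \<and>
     (\<forall>u\<in>verts G. \<mu> u \<noteq> lam u \<longrightarrow> dist_le G v u t)"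

definition mendable_verifier :: "nat \<Rightarrow> ('i, 'o) verifier \<Rightarrow> (nat \<Rightarrow> real) \<Rightarrow> bool" where
  "mendable_verifier r \<psi> T \<longleftrightarrow>
     (\<forall>G inp lam v. is_cycle G \<and> accepts_relaxed r \<psi> G inp lam \<and> v \<in> verts G \<longrightarrow>
        (\<exists>\<mu>. is_mend r \<psi> G inp lam v (T (card (verts G))) \<mu>))"

text \<open>A problem is given by its set of solutions (graph, inputs, outputs).\<close>
type_synonym ('i, 'o) problem = "graph \<Rightarrow> (nat \<Rightarrow> 'i) \<Rightarrow> (nat \<Rightarrow> 'o) \<Rightarrow> bool"

definition verifier_for :: "nat \<Rightarrow> ('i, 'o) verifier \<Rightarrow> ('i, 'o) problem \<Rightarrow> bool" where
  "verifier_for r \<psi> \<Pi> \<longleftrightarrow> local_verifier r \<psi> \<and>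
     (\<forall>G inp lam. is_cycle G \<longrightarrow> (\<Pi> G inp lam \<longleftrightarrow> (\<forall>v\<in>verts G. \<psi> G inp lam v)))"

text \<open>LCL on cycles: finite label sets are enforced by the class finite on the label types;
  degree is 2 on cycles.\<close>
definition is_LCL :: "('i::finite, 'o::finite) problem \<Rightarrow> bool" where
  "is_LCL \<Pi> \<longleftrightarrow> (\<exists>r \<psi>. verifier_for r \<psi> \<Pi>)"

definition problem_mendable :: "('i, 'o) problem \<Rightarrow> (nat \<Rightarrow> real) \<Rightarrow> bool" where
  "problem_mendable \<Pi> T \<longleftrightarrow> (\<exists>r \<psi>. verifier_for r \<psi> \<Pi> \<and> mendable_verifier r \<psi> T)"

end

theory Submission
  imports Defs
begin

(*
  Let r be the verification radius and pick n0 so large that R = T(n0) + 2r (rounded up)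
  satisfies 2R + 1 < n0; this is possible because T(n) = o(n). Only finitely many cycle
  lengths are at most 2R + 1, so T is bounded on them. On a longer cycle, cut out the
  radius-R window around the node to be mended and transplant it into the n0-cycle,
  labelling everything outside the window with bottom. The result is still accepted:
  radius-r neighbourhoods deep inside the window look the same on both cycles, and near
  its rim they contain a bottom. A T(n0)-mend there only changes nodes at distance at most
  T(n0) <= R - 2r from the centre, so all radius-r neighbourhoods touching a change lie in
  the window, and copying the mend back yields a T(n0)-mend on the original cycle.
*)

definition cycle_enum :: "graph \<Rightarrow> nat \<Rightarrow> (nat \<Rightarrow> nat) \<Rightarrow> bool" where
  "cycle_enum G n g \<longleftrightarrow> n \<ge> 3 \<and> bij_betw g {0..<n} (verts G) \<and>
     edges G = {(g i, g (Suc i mod n)) | i. i < n} \<union> {(g (Suc i mod n), g i) | i. i < n}"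

(* Integer positions, so that the window around a vertex is an interval of offsets. *)
definition cycle_pos :: "(nat \<Rightarrow> nat) \<Rightarrow> nat \<Rightarrow> int \<Rightarrow> nat" where
  "cycle_pos g n i = g (nat (i mod int n))"

lemma is_cycle_iff_cycle_enum: "is_cycle G \<longleftrightarrow> (\<exists>n g. cycle_enum G n g)"
  unfolding is_cycle_def cycle_enum_def by (rule refl)

lemma cycle_enum_exists: "n \<ge> 3 \<Longrightarrow> \<exists>G. cycle_enum G n id"
  by (rule exI[of _ "({0..<n}, {(i, Suc i mod n) | i. i < n} \<union> {(Suc i mod n, i) | i. i < n})"])
     (simp add: cycle_enum_def verts_def edges_def)

lemma in_ball_self: "v \<in> verts G \<Longrightarrow> v \<in> ball G v r"
  unfolding ball_def dist_le_def by (auto intro: exI[of _ 0])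

context
  fixes G n g
  assumes enum: "cycle_enum G n g"
begin

lemma cycle_enum_length_pos: "n > 0"
  using enum by (simp add: cycle_enum_def)

lemma card_verts_cycle_enum: "card (verts G) = n"
  using enum bij_betw_same_card[of g "{0..<n}" "verts G"] by (simp add: cycle_enum_def)

lemma cycle_pos_in_verts: "cycle_pos g n i \<in> verts G"
  using enum cycle_enum_length_pos by (auto simp: cycle_enum_def cycle_pos_def bij_betw_def nat_less_iff)

lemma verts_cycle_pos:
  assumes "x \<in> verts G"
  obtains d where "x = cycle_pos g n (a + d)"
proof -
  have "x \<in> g ` {0..<n}"
    using enum assms by (simp add: cycle_enum_def bij_betw_def)
  then obtain k where "k < n" "x = g k"
    by auto
  then have "x = cycle_pos g n (a + (int k - a))"
    by (simp add: cycle_pos_def)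
  then show thesis by (rule that)
qed

lemma cycle_pos_eq_iff: "cycle_pos g n a = cycle_pos g n b \<longleftrightarrow> a mod int n = b mod int n"
proof
  assume eq: "cycle_pos g n a = cycle_pos g n b"
  have "inj_on g {0..<n}"
    using enum by (simp add: cycle_enum_def bij_betw_def)
  moreover have "nat (a mod int n) \<in> {0..<n}" "nat (b mod int n) \<in> {0..<n}"
    using cycle_enum_length_pos by (simp_all add: nat_less_iff)
  ultimately have "nat (a mod int n) = nat (b mod int n)"
    using eq unfolding cycle_pos_def inj_on_def by blast
  then show "a mod int n = b mod int n"
    using cycle_enum_length_pos by (simp add: eq_nat_nat_iff)
qed (simp add: cycle_pos_def)

lemma cycle_pos_inj:
  assumes "\<bar>a - b\<bar> < int n" and "cycle_pos g n a = cycle_pos g n b"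
  shows "a = b"
proof -
  obtain q where q: "a - b = int n * q"
    using assms(2) by (auto simp: cycle_pos_eq_iff mod_eq_dvd_iff elim: dvdE)
  have "q = 0"
  proof (rule ccontr)
    assume "q \<noteq> 0"
    then have "1 \<le> \<bar>q\<bar>"
      by linarith
    then have "int n \<le> \<bar>int n * q\<bar>"
      by (simp add: abs_mult mult_le_cancel_left1)
    then show False
      using assms(1) q by simp
  qed
  then show ?thesis
    using q by simp
qed

lemma edges_cycle_pos:
  "edges G = {(cycle_pos g n j, cycle_pos g n (j + 1)) | j. True} \<union>
             {(cycle_pos g n (j + 1), cycle_pos g n j) | j. True}"
proof -
  have step: "g (Suc i mod n) = cycle_pos g n (int i + 1)" for i
  proof -
    have "int (Suc i mod n) = (int i + 1) mod int n"
      by (metis add.commute of_nat_Suc zmod_int)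
    then show ?thesis
      unfolding cycle_pos_def by (metis nat_int)
  qed
  have "{(g i, g (Suc i mod n)) | i. i < n} = {(cycle_pos g n j, cycle_pos g n (j + 1)) | j. True}"
  proof (intro equalityI subsetI)
    fix x assume "x \<in> {(g i, g (Suc i mod n)) | i. i < n}"
    then obtain i where "i < n" "x = (g i, g (Suc i mod n))"
      by blast
    then have "x = (cycle_pos g n (int i), cycle_pos g n (int i + 1))"
      unfolding step by (simp add: cycle_pos_def)
    then show "x \<in> {(cycle_pos g n j, cycle_pos g n (j + 1)) | j. True}"
      by blast
  next
    fix x assume "x \<in> {(cycle_pos g n j, cycle_pos g n (j + 1)) | j. True}"
    then obtain j where x: "x = (cycle_pos g n j, cycle_pos g n (j + 1))"
      by blast
    define i where "i = nat (j mod int n)"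
    have "i < n"
      using cycle_enum_length_pos by (simp add: i_def nat_less_iff)
    moreover have "int i = j mod int n"
      using cycle_enum_length_pos by (simp add: i_def)
    then have "x = (g i, g (Suc i mod n))"
      unfolding x step by (simp add: i_def cycle_pos_def mod_add_left_eq)
    ultimately show "x \<in> {(g i, g (Suc i mod n)) | i. i < n}"
      by blast
  qed
  then show ?thesis
    using enum unfolding cycle_enum_def by blast
qed

lemma cycle_pos_edge_iff:
  "(cycle_pos g n a, y) \<in> edges G \<longleftrightarrow> y = cycle_pos g n (a + 1) \<or> y = cycle_pos g n (a - 1)"
proof -
  have "cycle_pos g n a = cycle_pos g n j \<longleftrightarrow> cycle_pos g n (a + 1) = cycle_pos g n (j + 1)" for j
    unfolding cycle_pos_eq_iff by (simp add: mod_eq_dvd_iff)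
  moreover have "cycle_pos g n a = cycle_pos g n (j + 1) \<longleftrightarrow> cycle_pos g n (a - 1) = cycle_pos g n j" for j
    unfolding cycle_pos_eq_iff by (simp add: mod_eq_dvd_iff algebra_simps)
  ultimately show ?thesis
    unfolding edges_cycle_pos by auto
qed

lemma relpow_from_cycle_pos:
  "(cycle_pos g n a, y) \<in> edges G ^^ k \<Longrightarrow> \<exists>d. \<bar>d\<bar> \<le> int k \<and> y = cycle_pos g n (a + d)"
proof (induction k arbitrary: y)
  case 0
  then show ?case
    by (intro exI[of _ 0]) simp
next
  case (Suc k)
  then obtain z where z: "(cycle_pos g n a, z) \<in> edges G ^^ k" "(z, y) \<in> edges G"
    by (auto elim: relpow_Suc_E)
  then obtain d where d: "\<bar>d\<bar> \<le> int k" "z = cycle_pos g n (a + d)"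
    using Suc.IH by blast
  then have "y = cycle_pos g n (a + (d + 1)) \<or> y = cycle_pos g n (a + (d - 1))"
    using z(2) cycle_pos_edge_iff by (simp add: algebra_simps)
  moreover have "\<bar>d + 1\<bar> \<le> int (Suc k)" "\<bar>d - 1\<bar> \<le> int (Suc k)"
    using d(1) by linarith+
  ultimately show ?case
    by blast
qed

lemma cycle_pos_relpow:
  "(cycle_pos g n a, cycle_pos g n (a + int k)) \<in> edges G ^^ k \<and>
   (cycle_pos g n a, cycle_pos g n (a - int k)) \<in> edges G ^^ k"
proof (induction k)
  case 0
  then show ?case by simp
next
  case (Suc k)
  have "(cycle_pos g n (a + int k), cycle_pos g n (a + int (Suc k))) \<in> edges G"
       "(cycle_pos g n (a - int k), cycle_pos g n (a - int (Suc k))) \<in> edges G"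
    using cycle_pos_edge_iff by (simp_all add: algebra_simps)
  with Suc.IH show ?case
    by (blast intro: relpow_Suc_I)
qed

lemma dist_le_cycle_pos_iff:
  "dist_le G (cycle_pos g n a) y t \<longleftrightarrow> (\<exists>d. real_of_int \<bar>d\<bar> \<le> t \<and> y = cycle_pos g n (a + d))"
proof
  assume "dist_le G (cycle_pos g n a) y t"
  then obtain k where k: "real k \<le> t" "(cycle_pos g n a, y) \<in> edges G ^^ k"
    unfolding dist_le_def by blast
  then obtain d where "\<bar>d\<bar> \<le> int k" "y = cycle_pos g n (a + d)"
    using relpow_from_cycle_pos by blast
  with k(1) show "\<exists>d. real_of_int \<bar>d\<bar> \<le> t \<and> y = cycle_pos g n (a + d)"
    by (metis of_int_le_iff of_int_of_nat_eq order_trans)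
next
  assume "\<exists>d. real_of_int \<bar>d\<bar> \<le> t \<and> y = cycle_pos g n (a + d)"
  then obtain d where d: "real_of_int \<bar>d\<bar> \<le> t" "y = cycle_pos g n (a + d)"
    by blast
  have "a + d = a + int (nat \<bar>d\<bar>) \<or> a + d = a - int (nat \<bar>d\<bar>)"
    by linarith
  then have "(cycle_pos g n a, y) \<in> edges G ^^ nat \<bar>d\<bar>"
    using cycle_pos_relpow d(2) by metis
  moreover have "real (nat \<bar>d\<bar>) \<le> t"
    using d(1) by simp
  ultimately show "dist_le G (cycle_pos g n a) y t"
    unfolding dist_le_def using cycle_pos_in_verts by blast
qed

lemma ball_cycle_pos: "ball G (cycle_pos g n a) r = {cycle_pos g n (a + d) | d. \<bar>d\<bar> \<le> int r}"
proof -
  have "real_of_int \<bar>d\<bar> \<le> real r \<longleftrightarrow> \<bar>d\<bar> \<le> int r" for d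
    by linarith
  then show ?thesis
    unfolding ball_def dist_le_cycle_pos_iff by auto
qed

lemma cycle_pos_notin_ball:
  assumes "2 * R + 1 < n" and "\<bar>c\<bar> = int R + 1"
  shows "cycle_pos g n (a + c) \<notin> ball G (cycle_pos g n a) R"
proof
  assume "cycle_pos g n (a + c) \<in> ball G (cycle_pos g n a) R"
  then obtain d where d: "\<bar>d\<bar> \<le> int R" "cycle_pos g n (a + c) = cycle_pos g n (a + d)"
    unfolding ball_cycle_pos by auto
  have "a + c = a + d"
    using d assms by (intro cycle_pos_inj) auto
  then show False
    using d(1) assms(2) by simp
qed

lemma cycle_pos_shift: "cycle_pos g n x = cycle_pos g n y \<Longrightarrow> cycle_pos g n (x + c) = cycle_pos g n (y + c)"
  unfolding cycle_pos_eq_iff by (simp add: mod_eq_dvd_iff)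

lemma cycle_pos_edge_iff_near:
  assumes "2 * r + 1 < n" and "\<bar>d\<bar> \<le> int r" and "\<bar>e\<bar> \<le> int r"
  shows "(cycle_pos g n (i + d), cycle_pos g n (i + e)) \<in> edges G \<longleftrightarrow> e = d + 1 \<or> e = d - 1"
proof -
  have shift: "cycle_pos g n (i + e) = cycle_pos g n (i + d + s) \<longleftrightarrow> e = d + s"
    if "\<bar>s\<bar> = 1" for s
  proof
    assume "cycle_pos g n (i + e) = cycle_pos g n (i + d + s)"
    moreover have "\<bar>(i + e) - (i + d + s)\<bar> < int n"
      using assms that by linarith
    ultimately show "e = d + s"
      using cycle_pos_inj by force
  qed (simp add: add.assoc)
  show ?thesis
    using shift[of 1] shift[of "-1"] by (simp add: cycle_pos_edge_iff)
qed

end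

definition agree_on_window ::
  "nat \<Rightarrow> (nat \<Rightarrow> nat) \<Rightarrow> nat \<Rightarrow> int \<Rightarrow> (nat \<Rightarrow> 'a) \<Rightarrow> (nat \<Rightarrow> nat) \<Rightarrow> nat \<Rightarrow> int \<Rightarrow> (nat \<Rightarrow> 'a) \<Rightarrow> bool"
  where "agree_on_window R g n i f g' n' i' f' \<longleftrightarrow>
    (\<forall>d. \<bar>d\<bar> \<le> int R \<longrightarrow> f' (cycle_pos g' n' (i' + d)) = f (cycle_pos g n (i + d)))"

lemma agree_on_window_commute:
  "agree_on_window R g n i f g' n' i' f' \<Longrightarrow> agree_on_window R g' n' i' f' g n i f"
  unfolding agree_on_window_def by simp

lemma agree_on_window_shift:
  assumes "agree_on_window R g n i f g' n' i' f'" and "\<bar>s\<bar> + int r \<le> int R"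
  shows "agree_on_window r g n (i + s) f g' n' (i' + s) f'"
  unfolding agree_on_window_def
proof (intro allI impI)
  fix d assume "\<bar>d\<bar> \<le> int r"
  then have "\<bar>s + d\<bar> \<le> int R"
    using assms(2) by linarith
  then show "f' (cycle_pos g' n' (i' + s + d)) = f (cycle_pos g n (i + s + d))"
    using assms(1) unfolding agree_on_window_def by (simp add: add.assoc)
qed

definition cycle_offset :: "(nat \<Rightarrow> nat) \<Rightarrow> nat \<Rightarrow> int \<Rightarrow> nat \<Rightarrow> nat \<Rightarrow> int" where
  "cycle_offset g n i R x = (THE d. \<bar>d\<bar> \<le> int R \<and> x = cycle_pos g n (i + d))"

lemma cycle_offset_cycle_pos:
  assumes "cycle_enum G n g" and "2 * R < n" and "\<bar>d\<bar> \<le> int R"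
  shows "cycle_offset g n i R (cycle_pos g n (i + d)) = d"
  unfolding cycle_offset_def
proof (rule the_equality)
  fix e assume e: "\<bar>e\<bar> \<le> int R \<and> cycle_pos g n (i + d) = cycle_pos g n (i + e)"
  have "i + e = i + d"
    using assms(2,3) e by (intro cycle_pos_inj[OF assms(1)]) auto
  then show "e = d"
    by simp
qed (use assms(3) in simp)

lemma window_copy_exists:
  assumes "cycle_enum G' n' g'" and "2 * R < n'"
  obtains f' where "agree_on_window R g n i f g' n' i' f'"
    and "\<And>x. x \<notin> ball G' (cycle_pos g' n' i') R \<Longrightarrow> f' x = h x"
proof
  let ?f' = "\<lambda>x. if x \<in> ball G' (cycle_pos g' n' i') R
                 then f (cycle_pos g n (i + cycle_offset g' n' i' R x)) else h x"
  show "agree_on_window R g n i f g' n' i' ?f'"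
    unfolding agree_on_window_def ball_cycle_pos[OF assms(1)]
    using cycle_offset_cycle_pos[OF assms] by auto
qed simp

lemma ball_iso_windows:
  assumes enum: "cycle_enum G n g" and enum': "cycle_enum G' n' g'"
    and n: "2 * r + 1 < n" and n': "2 * r + 1 < n'"
    and inp: "agree_on_window r g n i inp g' n' i' inp'"
    and lab: "agree_on_window r g n i L g' n' i' L'"
  shows "ball_iso r G inp L (cycle_pos g n i) G' inp' L' (cycle_pos g' n' i')
           (\<lambda>x. cycle_pos g' n' (i' + cycle_offset g n i r x))"
proof -
  let ?f = "\<lambda>x. cycle_pos g' n' (i' + cycle_offset g n i r x)"
  have B: "ball G (cycle_pos g n i) r = {cycle_pos g n (i + d) | d. \<bar>d\<bar> \<le> int r}"
    using ball_cycle_pos[OF enum] .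
  have B': "ball G' (cycle_pos g' n' i') r = {cycle_pos g' n' (i' + d) | d. \<bar>d\<bar> \<le> int r}"
    using ball_cycle_pos[OF enum'] .
  have f: "?f (cycle_pos g n (i + d)) = cycle_pos g' n' (i' + d)" if "\<bar>d\<bar> \<le> int r" for d
    using cycle_offset_cycle_pos[OF enum _ that] n by simp
  have "inj_on ?f (ball G (cycle_pos g n i) r)"
  proof (rule inj_onI)
    fix x y assume "x \<in> ball G (cycle_pos g n i) r" "y \<in> ball G (cycle_pos g n i) r" "?f x = ?f y"
    then obtain d e where de: "\<bar>d\<bar> \<le> int r" "\<bar>e\<bar> \<le> int r" "x = cycle_pos g n (i + d)"
        "y = cycle_pos g n (i + e)" "cycle_pos g' n' (i' + d) = cycle_pos g' n' (i' + e)"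
      unfolding B using f by auto
    have "i' + d = i' + e"
      using de n' by (intro cycle_pos_inj[OF enum']) auto
    then show "x = y"
      using de by simp
  qed
  moreover have "?f ` ball G (cycle_pos g n i) r = ball G' (cycle_pos g' n' i') r"
    unfolding B B' using f by (auto simp: image_iff) (metis f)
  moreover have "?f (cycle_pos g n i) = cycle_pos g' n' i'"
    using f[of 0] by simp
  moreover have "\<forall>x\<in>ball G (cycle_pos g n i) r. \<forall>y\<in>ball G (cycle_pos g n i) r.
      (x, y) \<in> edges G \<longleftrightarrow> (?f x, ?f y) \<in> edges G'"
    unfolding B using f cycle_pos_edge_iff_near[OF enum n] cycle_pos_edge_iff_near[OF enum' n']
    by auto
  moreover have "\<forall>x\<in>ball G (cycle_pos g n i) r. inp' (?f x) = inp x \<and> L' (?f x) = L x"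
    unfolding B using f inp lab unfolding agree_on_window_def by auto
  ultimately show ?thesis
    unfolding ball_iso_def bij_betw_def by blast
qed

lemma relaxed_cong:
  "(\<And>u. u \<in> ball G v r \<Longrightarrow> \<mu> u = \<mu>' u) \<Longrightarrow> relaxed r \<psi> G inp \<mu> v = relaxed r \<psi> G inp \<mu>' v"
  unfolding relaxed_def by simp

lemma relaxed_transfer:
  assumes verifier: "local_verifier r \<psi>"
    and enum: "cycle_enum G n g" and enum': "cycle_enum G' n' g'"
    and n: "2 * r + 1 < n" and n': "2 * r + 1 < n'"
    and inp: "agree_on_window r g n i inp g' n' i' inp'"
    and lab: "agree_on_window r g n i \<mu> g' n' i' \<mu>'"
    and rel: "relaxed r \<psi> G inp \<mu> (cycle_pos g n i)"
  shows "relaxed r \<psi> G' inp' \<mu>' (cycle_pos g' n' i')"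
proof (cases "\<exists>d. \<bar>d\<bar> \<le> int r \<and> \<mu> (cycle_pos g n (i + d)) = None")
  case True
  with lab show ?thesis
    unfolding relaxed_def ball_cycle_pos[OF enum'] agree_on_window_def by fastforce
next
  case False
  define L where "L = (\<lambda>x. the (\<mu> x))"
  have L: "\<mu> (cycle_pos g n (i + d)) = Some (L (cycle_pos g n (i + d)))" if "\<bar>d\<bar> \<le> int r" for d
    using False that unfolding L_def by auto
  then have "\<psi> G inp L (cycle_pos g n i)"
    using rel unfolding relaxed_def ball_cycle_pos[OF enum] by auto
  moreover have "\<psi> G inp L (cycle_pos g n i) = \<psi> G' inp' L' (cycle_pos g' n' i')"
    if L': "\<forall>u\<in>ball G' (cycle_pos g' n' i') r. \<mu>' u = Some (L' u)" for L'
  proof -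
    have "agree_on_window r g n i L g' n' i' L'"
      using L L' lab unfolding agree_on_window_def ball_cycle_pos[OF enum'] by force
    then have "ball_iso r G inp L (cycle_pos g n i) G' inp' L' (cycle_pos g' n' i')
                 (\<lambda>x. cycle_pos g' n' (i' + cycle_offset g n i r x))"
      using ball_iso_windows[OF enum enum' n n' inp] by blast
    moreover have "is_cycle G" "is_cycle G'"
      using enum enum' is_cycle_iff_cycle_enum by blast+
    ultimately show ?thesis
      using verifier cycle_pos_in_verts[OF enum] cycle_pos_in_verts[OF enum']
      unfolding local_verifier_def by blast
  qed
  ultimately show ?thesis
    unfolding relaxed_def by blast
qed

lemma accepts_relaxed_window:
  assumes verifier: "local_verifier r \<psi>"
    and enum: "cycle_enum G n g" and enum': "cycle_enum G' n' g'"
    and n: "2 * R + 1 < n" and n': "2 * R + 1 < n'" and "r \<le> R"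
    and acc: "accepts_relaxed r \<psi> G inp lam"
    and inp: "agree_on_window R g n a inp g' n' a' inp'"
    and lab: "agree_on_window R g n a lam g' n' a' lam'"
    and outside: "\<And>x. x \<notin> ball G' (cycle_pos g' n' a') R \<Longrightarrow> lam' x = None"
  shows "accepts_relaxed r \<psi> G' inp' lam'"
  unfolding accepts_relaxed_def
proof
  fix x assume x: "x \<in> verts G'"
  show "relaxed r \<psi> G' inp' lam' x"
  proof (cases "x \<in> ball G' (cycle_pos g' n' a') R")
    case False
    then show ?thesis
      using outside in_ball_self[OF x] unfolding relaxed_def by blast
  next
    case True
    then obtain d where d: "\<bar>d\<bar> \<le> int R" "x = cycle_pos g' n' (a' + d)"
      unfolding ball_cycle_pos[OF enum'] by blast
    consider "\<bar>d\<bar> + int r \<le> int R" | "int R < \<bar>d\<bar> + int r"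
      by linarith
    then show ?thesis
    proof cases
      case 1
      have "relaxed r \<psi> G inp lam (cycle_pos g n (a + d))"
        using acc cycle_pos_in_verts[OF enum] unfolding accepts_relaxed_def by blast
      moreover have "2 * r + 1 < n" "2 * r + 1 < n'"
        using n n' \<open>r \<le> R\<close> by linarith+
      moreover have "agree_on_window r g n (a + d) inp g' n' (a' + d) inp'"
        by (rule agree_on_window_shift[OF inp 1])
      moreover have "agree_on_window r g n (a + d) lam g' n' (a' + d) lam'"
        by (rule agree_on_window_shift[OF lab 1])
      ultimately show ?thesis
        using relaxed_transfer[OF verifier enum enum'] d(2) by blast
    next
      case 2
      \<comment> \<open>the radius-r ball around x reaches the position R + 1 or -(R + 1), which is bottom\<close>
      define e where "e = (if d \<ge> 0 then int R + 1 - d else - int R - 1 - d)"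
      have "\<bar>e\<bar> \<le> int r" "\<bar>d + e\<bar> = int R + 1"
        using 2 d(1) unfolding e_def by auto
      then have "cycle_pos g' n' (a' + (d + e)) \<in> ball G' x r"
        and "cycle_pos g' n' (a' + (d + e)) \<notin> ball G' (cycle_pos g' n' a') R"
        using cycle_pos_notin_ball[OF enum' n'] unfolding d(2) ball_cycle_pos[OF enum']
        by (auto simp: add.assoc)
      then show ?thesis
        using outside unfolding relaxed_def by blast
    qed
  qed
qed

lemma mend_window_changes:
  assumes enum: "cycle_enum G n g" and enum': "cycle_enum G' n' g'"
    and n': "2 * R < n'" and "t \<le> real R"
    and lab: "agree_on_window R g n a lam g' n' a' lam'"
    and mend: "is_mend r \<psi> G' inp' lam' (cycle_pos g' n' a') t \<mu>'"
    and restore: "agree_on_window R g' n' a' \<mu>' g n a \<mu>"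
    and outside: "\<And>x. x \<notin> ball G (cycle_pos g n a) R \<Longrightarrow> \<mu> x = lam x"
    and changed: "\<mu> u \<noteq> lam u"
  shows "\<exists>d. real_of_int \<bar>d\<bar> \<le> t \<and> u = cycle_pos g n (a + d)"
proof -
  obtain d where d: "\<bar>d\<bar> \<le> int R" "u = cycle_pos g n (a + d)"
    using outside changed unfolding ball_cycle_pos[OF enum] by blast
  have "\<mu>' (cycle_pos g' n' (a' + d)) \<noteq> lam' (cycle_pos g' n' (a' + d))"
    using changed d lab restore unfolding agree_on_window_def by simp
  then have "dist_le G' (cycle_pos g' n' a') (cycle_pos g' n' (a' + d)) t"
    using mend cycle_pos_in_verts[OF enum'] unfolding is_mend_def by blast
  then obtain e where e: "real_of_int \<bar>e\<bar> \<le> t" "cycle_pos g' n' (a' + d) = cycle_pos g' n' (a' + e)"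
    unfolding dist_le_cycle_pos_iff[OF enum'] by blast
  have "a' + d = a' + e"
    using d(1) e \<open>t \<le> real R\<close> n' by (intro cycle_pos_inj[OF enum']) auto
  then show ?thesis
    using d(2) e(1) by auto
qed

lemma accepts_relaxed_window_restore:
  assumes verifier: "local_verifier r \<psi>"
    and enum: "cycle_enum G n g" and enum': "cycle_enum G' n' g'"
    and n: "2 * R + 1 < n" and n': "2 * R + 1 < n'" and t: "t + 2 * real r \<le> real R"
    and acc: "accepts_relaxed r \<psi> G inp lam" and acc': "accepts_relaxed r \<psi> G' inp' \<mu>'"
    and inp: "agree_on_window R g n a inp g' n' a' inp'"
    and restore: "agree_on_window R g' n' a' \<mu>' g n a \<mu>"
    and changes: "\<And>u. \<mu> u \<noteq> lam u \<Longrightarrow> \<exists>d. real_of_int \<bar>d\<bar> \<le> t \<and> u = cycle_pos g n (a + d)"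
  shows "accepts_relaxed r \<psi> G inp \<mu>"
  unfolding accepts_relaxed_def
proof
  fix w assume w: "w \<in> verts G"
  show "relaxed r \<psi> G inp \<mu> w"
  proof (cases "\<forall>y\<in>ball G w r. \<mu> y = lam y")
    case True
    then show ?thesis
      using relaxed_cong[of G w r \<mu> lam] acc w unfolding accepts_relaxed_def by auto
  next
    case False
    then obtain y where y: "y \<in> ball G w r" "\<mu> y \<noteq> lam y"
      by blast
    then obtain d where d: "real_of_int \<bar>d\<bar> \<le> t" "y = cycle_pos g n (a + d)"
      using changes by blast
    obtain s where s: "w = cycle_pos g n (a + s)"
      using verts_cycle_pos[OF enum w] .
    then obtain e where e: "\<bar>e\<bar> \<le> int r" "y = cycle_pos g n (a + s + e)"
      using y(1) unfolding s ball_cycle_pos[OF enum] by auto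
    have "w = cycle_pos g n (a + (d - e))"
      using cycle_pos_shift[OF enum, of "a + s + e" "a + d" "- e"] d(2) e(2) s
      by (simp add: algebra_simps)
    moreover have bound: "\<bar>d - e\<bar> + int r \<le> int R"
      using d(1) e(1) t by linarith
    moreover have "2 * r + 1 < n" "2 * r + 1 < n'"
      using bound n n' by linarith+
    moreover have "relaxed r \<psi> G' inp' \<mu>' (cycle_pos g' n' (a' + (d - e)))"
      using acc' cycle_pos_in_verts[OF enum'] unfolding accepts_relaxed_def by blast
    ultimately show ?thesis
      using relaxed_transfer[OF verifier enum' enum]
        agree_on_window_shift[OF agree_on_window_commute[OF inp]]
        agree_on_window_shift[OF restore]
      by blast
  qed
qed

lemma is_mend_window_restore:
  assumes verifier: "local_verifier r \<psi>"
    and enum: "cycle_enum G n g" and enum': "cycle_enum G' n' g'"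
    and n: "2 * R + 1 < n" and n': "2 * R + 1 < n'" and t: "t + 2 * real r \<le> real R"
    and acc: "accepts_relaxed r \<psi> G inp lam"
    and inp: "agree_on_window R g n a inp g' n' a' inp'"
    and lab: "agree_on_window R g n a lam g' n' a' lam'"
    and mend: "is_mend r \<psi> G' inp' lam' (cycle_pos g' n' a') t \<mu>'"
    and restore: "agree_on_window R g' n' a' \<mu>' g n a \<mu>"
    and outside: "\<And>x. x \<notin> ball G (cycle_pos g n a) R \<Longrightarrow> \<mu> x = lam x"
  shows "is_mend r \<psi> G inp lam (cycle_pos g n a) t \<mu>"
proof -
  have changes: "\<exists>d. real_of_int \<bar>d\<bar> \<le> t \<and> u = cycle_pos g n (a + d)" if "\<mu> u \<noteq> lam u" for u
    using mend_window_changes[OF enum enum' _ _ lab mend restore outside that] n' t by simp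
  have "accepts_relaxed r \<psi> G inp \<mu>"
    using mend accepts_relaxed_window_restore[OF verifier enum enum' n n' t acc _ inp restore changes]
    unfolding is_mend_def by blast
  moreover have "\<mu> (cycle_pos g n a) \<noteq> None"
    using restore[unfolded agree_on_window_def, rule_format, of 0] mend
    unfolding is_mend_def by simp
  moreover have "lam u = None" if "\<mu> u = None" for u
  proof (cases "u \<in> ball G (cycle_pos g n a) R")
    case True
    then obtain d where "\<bar>d\<bar> \<le> int R" "u = cycle_pos g n (a + d)"
      unfolding ball_cycle_pos[OF enum] by blast
    then show ?thesis
      using that restore lab mend cycle_pos_in_verts[OF enum']
      unfolding agree_on_window_def is_mend_def by metis
  next
    case False
    then show ?thesis
      using outside that by simp
  qed
  moreover have "dist_le G (cycle_pos g n a) u t" if "\<mu> u \<noteq> lam u" for u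
    using changes[OF that] unfolding dist_le_cycle_pos_iff[OF enum] .
  ultimately show ?thesis
    unfolding is_mend_def by blast
qed

lemma mend_on_long_cycle:
  assumes verifier: "local_verifier r \<psi>" and mendable: "mendable_verifier r \<psi> T"
    and n0: "3 \<le> n0" "2 * R + 1 < n0" and R: "T n0 + 2 * real r \<le> real R" "r \<le> R"
    and G: "is_cycle G" "2 * R + 1 < card (verts G)"
    and acc: "accepts_relaxed r \<psi> G inp lam" and v: "v \<in> verts G"
  shows "\<exists>\<mu>. is_mend r \<psi> G inp lam v (T n0) \<mu>"
proof -
  obtain n g where enum: "cycle_enum G n g"
    using G(1) is_cycle_iff_cycle_enum by blast
  have n: "2 * R + 1 < n"
    using G(2) card_verts_cycle_enum[OF enum] by simp
  obtain G0 where enum0: "cycle_enum G0 n0 id"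
    using cycle_enum_exists[OF n0(1)] by blast
  obtain a where a: "v = cycle_pos g n a"
    using verts_cycle_pos[OF enum v] by (metis add_0)
  have "2 * R < n0" "2 * R < n"
    using n0(2) n by simp_all
  obtain inp' where inp': "agree_on_window R g n a inp id n0 0 inp'"
    using window_copy_exists[OF enum0 \<open>2 * R < n0\<close>] by blast
  obtain lam' where lam': "agree_on_window R g n a lam id n0 0 lam'"
    and none: "\<And>x. x \<notin> ball G0 (cycle_pos id n0 0) R \<Longrightarrow> lam' x = None"
    using window_copy_exists[OF enum0 \<open>2 * R < n0\<close>, of g n a lam 0 "\<lambda>_. None"] by blast
  have "accepts_relaxed r \<psi> G0 inp' lam'"
    using accepts_relaxed_window[OF verifier enum enum0 n n0(2) R(2) acc inp' lam' none] .
  then obtain \<mu>' where \<mu>': "is_mend r \<psi> G0 inp' lam' (cycle_pos id n0 0) (T n0) \<mu>'"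
    using mendable enum0 cycle_pos_in_verts[OF enum0] card_verts_cycle_enum[OF enum0]
      is_cycle_iff_cycle_enum unfolding mendable_verifier_def by metis
  obtain \<mu> where "agree_on_window R id n0 0 \<mu>' g n a \<mu>"
    and "\<And>x. x \<notin> ball G (cycle_pos g n a) R \<Longrightarrow> \<mu> x = lam x"
    using window_copy_exists[OF enum \<open>2 * R < n\<close>, of id n0 0 \<mu>' a lam] by blast
  then have "is_mend r \<psi> G inp lam v (T n0) \<mu>"
    using is_mend_window_restore[OF verifier enum enum0 n n0(2) R(1) acc inp' lam' \<mu>'] a by blast
  then show ?thesis
    by blast
qed

lemma is_mend_mono: "is_mend r \<psi> G inp lam v t \<mu> \<Longrightarrow> t \<le> t' \<Longrightarrow> is_mend r \<psi> G inp lam v t' \<mu>"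
  unfolding is_mend_def dist_le_def by force

lemma mendable_verifier_const_if_long_cycles:
  assumes mendable: "mendable_verifier r \<psi> T"
    and long: "\<And>G inp lam v. is_cycle G \<Longrightarrow> M < card (verts G) \<Longrightarrow>
                 accepts_relaxed r \<psi> G inp lam \<Longrightarrow> v \<in> verts G \<Longrightarrow> \<exists>\<mu>. is_mend r \<psi> G inp lam v t \<mu>"
  shows "mendable_verifier r \<psi> (\<lambda>_. max t (Max (T ` {..M})))"
  unfolding mendable_verifier_def
proof (intro allI impI)
  fix G inp lam v
  assume G: "is_cycle G \<and> accepts_relaxed r \<psi> G inp lam \<and> v \<in> verts G"
  show "\<exists>\<mu>. is_mend r \<psi> G inp lam v (max t (Max (T ` {..M}))) \<mu>"
  proof (cases "M < card (verts G)")
    case True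
    then show ?thesis
      using long G is_mend_mono[of r \<psi> G inp lam v t _ "max t (Max (T ` {..M}))"] by fastforce
  next
    case False
    then have "T (card (verts G)) \<le> max t (Max (T ` {..M}))"
      by (simp add: le_max_iff_disj)
    then show ?thesis
      using mendable G is_mend_mono unfolding mendable_verifier_def by blast
  qed
qed

lemma sublinear_window:
  assumes "T \<in> o(\<lambda>n. real n)"
  shows "\<exists>n0 R. 3 \<le> n0 \<and> 2 * R + 1 < n0 \<and> T n0 + 2 * real r \<le> real R \<and> r \<le> R"
proof -
  have "eventually (\<lambda>n. norm (T n) \<le> 1/4 * norm (real n)) at_top"
    using landau_o.smallD[OF assms, of "1/4"] by simp
  then obtain N where N: "\<And>n. n \<ge> N \<Longrightarrow> \<bar>T n\<bar> \<le> real n / 4"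
    unfolding eventually_at_top_linorder by auto
  define n0 where "n0 = N + 8 * r + 9"
  define K where "K = nat \<lceil>T n0\<rceil>"
  define R where "R = K + 2 * r"
  have "\<bar>T n0\<bar> \<le> real n0 / 4"
    using N[of n0] unfolding n0_def by simp
  then have K: "T n0 \<le> real K" "real K \<le> real n0 / 4 + 1"
    unfolding K_def by linarith+
  have "real (2 * R + 1) = 2 * real K + 4 * real r + 1" "real n0 = real N + 8 * real r + 9"
    unfolding R_def n0_def by simp_all
  then have "2 * R + 1 < n0"
    using K by linarith
  moreover have "T n0 + 2 * real r \<le> real R" "3 \<le> n0" "r \<le> R"
    using K unfolding n0_def R_def by simp_all
  ultimately show ?thesis
    by blast
qed

theorem corollary8p2:
  fixes \<Pi> :: "('i::finite, 'o::finite) problem" and T :: "nat \<Rightarrow> real"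
  assumes "is_LCL \<Pi>"
    and "problem_mendable \<Pi> T"
    and "T \<in> o(\<lambda>n. real n)"
  shows "\<exists>c::real. problem_mendable \<Pi> (\<lambda>_. c)"
proof -
  obtain r \<psi> where verifier: "verifier_for r \<psi> \<Pi>" and mendable: "mendable_verifier r \<psi> T"
    using assms(2) unfolding problem_mendable_def by blast
  obtain n0 R where n0: "3 \<le> n0" "2 * R + 1 < n0" and R: "T n0 + 2 * real r \<le> real R" "r \<le> R"
    using sublinear_window[OF assms(3)] by blast
  have "local_verifier r \<psi>"
    using verifier unfolding verifier_for_def by blast
  then have "mendable_verifier r \<psi> (\<lambda>_. max (T n0) (Max (T ` {..2 * R + 1})))"
    using mend_on_long_cycle[OF _ mendable n0 R]
    by (intro mendable_verifier_const_if_long_cycles[OF mendable]) blast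
  then show ?thesis
    using verifier unfolding problem_mendable_def by blast
qed

end
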